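(* Let $\mathcal{B}$ be a denumerable and measurable partition of $\Omega$ with $\underline{P}(B)>0$ for every $B\in\mathcal{B}$, and let $\Pi$ be the set of probability measures compatible with $\underline{P}$. For any event $A\in\mathscr{B}(\Omega)$, under the generalized Bayes rule, (i) $\mathcal{B}$ cannot induce sure loss in $A$, and (ii) $\mathcal{B}$ cannot contract $A$.
   Context: $\Omega$ is a separable, completely metrizable space with Borel $\sigma$-algebra $\mathscr{B}(\Omega)$; $\underline{P}$ is a Choquet capacity of order 2 on $\mathscr{B}(\Omega)$ (a coherent lower probability with weakly compact set of dominating measures satisfying $\underline{P}(A\cup B)\ge\underline{P}(A)+\underline{P}(B)-\underline{P}(A\cap B)$); $\Pi=\{P:P\ge\underline{P}\}$, $\underline{P}(A)=\inf_{P\in\Pi}P(A)$, $\overline{P}(A)=\sup_{P\in\Pi}P(A)=1-\underline{P}(A^c)$. Generalized Bayes rule: $\underline{P}_{\mathfrak{B}}(A\mid B)=\inf_{P\in\Pi}P(A\cap B)/P(B)$, $\overline{P}_{\mathfrak{B}}(A\mid B)=\sup_{P\in\Pi}P(A\cap B)/P(B)$. For an updating rule with conditional lower/upper probabilities $\underline{P}_\bullet,\overline{P}_\bullet$: $\mathcal{B}$ induces sure loss in $A$ if $\inf_{B\in\mathcal{B}}\underline{P}_\bullet(A\mid B)>\overline{P}(A)$ or $\sup_{B\in\mathcal{B}}\overline{P}_\bullet(A\mid B)<\underline{P}(A)$. $\mathcal{B}$ strictly contracts $A$ if $\underline{P}(A)<\inf_{B\in\mathcal{B}}\underline{P}_\bullet(A\mid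 B)\le\sup_{B\in\mathcal{B}}\overline{P}_\bullet(A\mid B)<\overline{P}(A)$; $\mathcal{B}$ contracts $A$ if this holds with either (but not both) of the two outer strict inequalities allowed to be an equality. *)

theory Defs
  imports "HOL-Probability.Probability"
begin

definition credal_set :: "('a::topological_space set \<Rightarrow> real) \<Rightarrow> 'a measure set" where
  "credal_set lP = {P. prob_space P \<and> sets P = sets borel \<and>
                        (\<forall>A\<in>sets borel. lP A \<le> measure P A)}"

definition weak_conv_seq :: "(nat \<Rightarrow> 'a::topological_space measure) \<Rightarrow> 'a measure \<Rightarrow> bool" where
  "weak_conv_seq Ps P \<longleftrightarrow>
     (\<forall>f :: 'a \<Rightarrow> real. continuous_on UNIV f \<and> bounded (range f) \<longrightarrow>
        (\<lambda>n. integral\<^sup>L (Ps n) f) \<longlonglongrightarrow> integral\<^sup>L P f)"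

text \<open>Weak compactness of a set of probability measures on a Polish space
  (where the weak topology is metrizable, so compactness = sequential compactness).\<close>
definition weakly_seq_compact_pm :: "'a::topological_space measure set \<Rightarrow> bool" where
  "weakly_seq_compact_pm M \<longleftrightarrow>
     (\<forall>Ps :: nat \<Rightarrow> 'a measure. (\<forall>n. Ps n \<in> M) \<longrightarrow>
        (\<exists>(r :: nat \<Rightarrow> nat) P. strict_mono r \<and> P \<in> M \<and> weak_conv_seq (Ps \<circ> r) P))"

definition choquet_capacity_2 :: "('a::topological_space set \<Rightarrow> real) \<Rightarrow> bool" where
  "choquet_capacity_2 lP \<longleftrightarrow>
     credal_set lP \<noteq> {} \<and>
     (\<forall>A\<in>sets borel. lP A = (INF P\<in>credal_set lP. measure P A)) \<and>
     weakly_seq_compact_pm (credal_set lP) \<and>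
     (\<forall>A\<in>sets borel. \<forall>B\<in>sets borel. lP (A \<union> B) \<ge> lP A + lP B - lP (A \<inter> B))"

definition upper_prob :: "('a set \<Rightarrow> real) \<Rightarrow> 'a set \<Rightarrow> real" where
  "upper_prob lP A = 1 - lP (- A)"

definition gbayes_lower :: "('a::topological_space set \<Rightarrow> real) \<Rightarrow> 'a set \<Rightarrow> 'a set \<Rightarrow> real" where
  "gbayes_lower lP A B = (INF P\<in>credal_set lP. measure P (A \<inter> B) / measure P B)"

definition gbayes_upper :: "('a::topological_space set \<Rightarrow> real) \<Rightarrow> 'a set \<Rightarrow> 'a set \<Rightarrow> real" where
  "gbayes_upper lP A B = (SUP P\<in>credal_set lP. measure P (A \<inter> B) / measure P B)"

definition measurable_partition :: "'a::topological_space set set \<Rightarrow> bool" where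
  "measurable_partition \<B> \<longleftrightarrow>
     \<B> \<subseteq> sets borel \<and> {} \<notin> \<B> \<and> \<Union>\<B> = UNIV \<and>
     (\<forall>B1\<in>\<B>. \<forall>B2\<in>\<B>. B1 \<noteq> B2 \<longrightarrow> B1 \<inter> B2 = {})"

definition induces_sure_loss ::
  "('a set \<Rightarrow> real) \<Rightarrow> ('a set \<Rightarrow> 'a set \<Rightarrow> real) \<Rightarrow> ('a set \<Rightarrow> 'a set \<Rightarrow> real)
   \<Rightarrow> 'a set set \<Rightarrow> 'a set \<Rightarrow> bool" where
  "induces_sure_loss lP cl cu \<B> A \<longleftrightarrow>
     (INF B\<in>\<B>. cl A B) > upper_prob lP A \<or> (SUP B\<in>\<B>. cu A B) < lP A"

definition strictly_contracts ::
  "('a set \<Rightarrow> real) \<Rightarrow> ('a set \<Rightarrow> 'a set \<Rightarrow> real) \<Rightarrow> ('a set \<Rightarrow> 'a set \<Rightarrow> real)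
   \<Rightarrow> 'a set set \<Rightarrow> 'a set \<Rightarrow> bool" where
  "strictly_contracts lP cl cu \<B> A \<longleftrightarrow>
     lP A < (INF B\<in>\<B>. cl A B) \<and> (INF B\<in>\<B>. cl A B) \<le> (SUP B\<in>\<B>. cu A B) \<and>
     (SUP B\<in>\<B>. cu A B) < upper_prob lP A"

definition contracts ::
  "('a set \<Rightarrow> real) \<Rightarrow> ('a set \<Rightarrow> 'a set \<Rightarrow> real) \<Rightarrow> ('a set \<Rightarrow> 'a set \<Rightarrow> real)
   \<Rightarrow> 'a set set \<Rightarrow> 'a set \<Rightarrow> bool" where
  "contracts lP cl cu \<B> A \<longleftrightarrow>
     lP A \<le> (INF B\<in>\<B>. cl A B) \<and> (INF B\<in>\<B>. cl A B) \<le> (SUP B\<in>\<B>. cu A B) \<and>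
     (SUP B\<in>\<B>. cu A B) \<le> upper_prob lP A \<and>
     (lP A < (INF B\<in>\<B>. cl A B) \<or> (SUP B\<in>\<B>. cu A B) < upper_prob lP A)"

end

theory Submission imports Defs begin

text \<open>Every compatible P is countably additive, so P(A) is a P(B)-weighted average of the
  conditional probabilities P(A | B) over the countable partition and lies between their infimum
  and supremum (conglomerability). Taking envelopes over the credal set gives
  inf_B lP(A | B) \<le> lP(A) \<le> uP(A) \<le> sup_B uP(A | B), which rules out both sure loss and
  contraction.\<close>

lemma emeasure_eq_nn_integral_partition:
  assumes "countable Bs" "Bs \<subseteq> sets M" "\<Union>Bs = space M" "disjoint Bs" "A \<in> sets M"
  shows "emeasure M A = (\<integral>\<^sup>+B. emeasure M (A \<inter> B) \<partial>count_space Bs)"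
proof -
  have "disjoint_family_on (\<lambda>B. A \<inter> B) Bs"
    using \<open>disjoint Bs\<close> unfolding disjoint_def disjoint_family_on_def by blast
  moreover have "A = (\<Union>B\<in>Bs. A \<inter> B)"
    using assms(3) sets.sets_into_space[OF assms(5)] by blast
  ultimately show ?thesis
    using emeasure_UN_countable[of Bs "\<lambda>B. A \<inter> B" M] assms by auto
qed

context prob_space
begin

lemma nn_integral_partition_eq_1:
  assumes "countable Bs" "Bs \<subseteq> events" "\<Union>Bs = space M" "disjoint Bs"
  shows "(\<integral>\<^sup>+B. emeasure M B \<partial>count_space Bs) = 1"
proof -
  have "(\<integral>\<^sup>+B. emeasure M B \<partial>count_space Bs)
      = (\<integral>\<^sup>+B. emeasure M (space M \<inter> B) \<partial>count_space Bs)"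
    using assms(3) by (intro nn_integral_cong arg_cong[where f = "emeasure M"]) auto
  also have "\<dots> = 1"
    using emeasure_eq_nn_integral_partition[OF assms sets.top] emeasure_space_1 by simp
  finally show ?thesis .
qed

lemma prob_ge_if_partition:
  assumes "countable Bs" "Bs \<subseteq> events" "\<Union>Bs = space M" "disjoint Bs" "A \<in> events"
    and "c \<ge> 0" and "\<And>B. B \<in> Bs \<Longrightarrow> c * prob B \<le> prob (A \<inter> B)"
  shows "c \<le> prob A"
proof -
  note total = nn_integral_partition_eq_1[OF assms(1-4)]
  have "ennreal c = (\<integral>\<^sup>+B. ennreal c * emeasure M B \<partial>count_space Bs)"
    by (simp add: nn_integral_cmult total)
  also have "\<dots> \<le> (\<integral>\<^sup>+B. emeasure M (A \<inter> B) \<partial>count_space Bs)"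
    using assms(2,5-7) by (intro nn_integral_mono)
      (auto simp: emeasure_eq_measure ennreal_mult[symmetric] ennreal_leI)
  also have "\<dots> = emeasure M A"
    using emeasure_eq_nn_integral_partition[OF assms(1-5)] by simp
  finally show ?thesis by (simp add: emeasure_eq_measure)
qed

lemma prob_le_if_partition:
  assumes "countable Bs" "Bs \<subseteq> events" "\<Union>Bs = space M" "disjoint Bs" "A \<in> events"
    and "c \<ge> 0" and "\<And>B. B \<in> Bs \<Longrightarrow> prob (A \<inter> B) \<le> c * prob B"
  shows "prob A \<le> c"
proof -
  note total = nn_integral_partition_eq_1[OF assms(1-4)]
  have "emeasure M A = (\<integral>\<^sup>+B. emeasure M (A \<inter> B) \<partial>count_space Bs)"
    using emeasure_eq_nn_integral_partition[OF assms(1-5)] by simp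
  also have "\<dots> \<le> (\<integral>\<^sup>+B. ennreal c * emeasure M B \<partial>count_space Bs)"
    using assms(2,5-7) by (intro nn_integral_mono)
      (auto simp: emeasure_eq_measure ennreal_mult[symmetric] ennreal_leI)
  also have "\<dots> = ennreal c"
    by (simp add: nn_integral_cmult total)
  finally show ?thesis using \<open>c \<ge> 0\<close> by (simp add: emeasure_eq_measure)
qed

lemma conditional_prob_bounds:
  assumes "A \<in> events" "B \<in> events"
  shows "0 \<le> prob (A \<inter> B) / prob B" "prob (A \<inter> B) / prob B \<le> 1"
proof -
  have "prob (A \<inter> B) \<le> prob B"
    using assms by (intro finite_measure_mono) auto
  then show "0 \<le> prob (A \<inter> B) / prob B" "prob (A \<inter> B) / prob B \<le> 1"
    by (auto simp: divide_le_eq_1 zero_less_measure_iff)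
qed

lemma prob_conglomerable:
  assumes "countable Bs" "Bs \<subseteq> events" "\<Union>Bs = space M" "disjoint Bs" "A \<in> events"
    and pos: "\<And>B. B \<in> Bs \<Longrightarrow> prob B > 0"
  shows "(INF B\<in>Bs. prob (A \<inter> B) / prob B) \<le> prob A"
    and "prob A \<le> (SUP B\<in>Bs. prob (A \<inter> B) / prob B)"
proof -
  obtain B0 where "B0 \<in> Bs"
    using assms(3) not_empty by auto
  have ratio: "0 \<le> prob (A \<inter> B) / prob B" "prob (A \<inter> B) / prob B \<le> 1" if "B \<in> Bs" for B
    using conditional_prob_bounds assms(2,5) that by auto
  show "(INF B\<in>Bs. prob (A \<inter> B) / prob B) \<le> prob A"
  proof (rule prob_ge_if_partition[OF assms(1-5)])
    show "0 \<le> (INF B\<in>Bs. prob (A \<inter> B) / prob B)"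
      using \<open>B0 \<in> Bs\<close> ratio by (intro cINF_greatest) auto
    fix B assume "B \<in> Bs"
    then have "(INF B\<in>Bs. prob (A \<inter> B) / prob B) \<le> prob (A \<inter> B) / prob B"
      using ratio by (intro cINF_lower bdd_belowI2[where m = 0]) auto
    then show "(INF B\<in>Bs. prob (A \<inter> B) / prob B) * prob B \<le> prob (A \<inter> B)"
      using pos[OF \<open>B \<in> Bs\<close>] by (simp add: pos_le_divide_eq)
  qed
  show "prob A \<le> (SUP B\<in>Bs. prob (A \<inter> B) / prob B)"
  proof (rule prob_le_if_partition[OF assms(1-5)])
    show "0 \<le> (SUP B\<in>Bs. prob (A \<inter> B) / prob B)"
      using \<open>B0 \<in> Bs\<close> ratio by (intro cSUP_upper2[where x = B0] bdd_aboveI2) auto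
    fix B assume "B \<in> Bs"
    then have "prob (A \<inter> B) / prob B \<le> (SUP B\<in>Bs. prob (A \<inter> B) / prob B)"
      using ratio by (intro cSUP_upper bdd_aboveI2[where M = 1]) auto
    then show "prob (A \<inter> B) \<le> (SUP B\<in>Bs. prob (A \<inter> B) / prob B) * prob B"
      using pos[OF \<open>B \<in> Bs\<close>] by (simp add: pos_divide_le_eq)
  qed
qed

end

definition coherent_lower_prob :: "('a::topological_space set \<Rightarrow> real) \<Rightarrow> bool" where
  "coherent_lower_prob lP \<longleftrightarrow>
     credal_set lP \<noteq> {} \<and> (\<forall>A\<in>sets borel. lP A = (INF P\<in>credal_set lP. measure P A))"

lemma choquet_capacity_2_imp_coherent: "choquet_capacity_2 lP \<Longrightarrow> coherent_lower_prob lP"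
  unfolding choquet_capacity_2_def coherent_lower_prob_def by blast

lemma credal_setD:
  assumes "P \<in> credal_set lP"
  shows "prob_space P" "sets P = sets borel" "space P = UNIV"
    and "A \<in> sets borel \<Longrightarrow> lP A \<le> measure P A"
  using assms sets_eq_imp_space_eq[of P borel] unfolding credal_set_def by auto

lemma lower_prob_le_upper_prob:
  assumes "credal_set lP \<noteq> {}" "A \<in> sets borel"
  shows "lP A \<le> upper_prob lP A"
proof -
  obtain P where P: "P \<in> credal_set lP"
    using assms(1) by blast
  interpret prob_space P
    using credal_setD(1)[OF P] .
  have "measure P (- A) = 1 - measure P A"
    using prob_compl[of A] credal_setD(2,3)[OF P] assms(2) by (simp add: Compl_eq_Diff_UNIV)
  moreover have "lP A \<le> prob A" "lP (- A) \<le> prob (- A)"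
    using credal_setD(4)[OF P] assms(2) by auto
  ultimately show ?thesis
    unfolding upper_prob_def by linarith
qed

lemma credal_conditional_prob_bounds:
  assumes "P \<in> credal_set lP" "A \<in> sets borel" "B \<in> sets borel"
  shows "0 \<le> measure P (A \<inter> B) / measure P B" "measure P (A \<inter> B) / measure P B \<le> 1"
  using prob_space.conditional_prob_bounds[OF credal_setD(1)[OF assms(1)]]
    credal_setD(2)[OF assms(1)] assms(2,3)
  by auto

lemma
  assumes "credal_set lP \<noteq> {}" "A \<in> sets borel" "B \<in> sets borel"
  shows gbayes_lower_nonneg: "0 \<le> gbayes_lower lP A B"
    and gbayes_upper_le_1: "gbayes_upper lP A B \<le> 1"
  using assms credal_conditional_prob_bounds
  unfolding gbayes_lower_def gbayes_upper_def
  by (auto intro!: cINF_greatest cSUP_least)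

lemma
  assumes "P \<in> credal_set lP" "A \<in> sets borel" "B \<in> sets borel"
  shows gbayes_lower_le: "gbayes_lower lP A B \<le> measure P (A \<inter> B) / measure P B"
    and gbayes_upper_ge: "measure P (A \<inter> B) / measure P B \<le> gbayes_upper lP A B"
  using assms credal_conditional_prob_bounds
  unfolding gbayes_lower_def gbayes_upper_def
  by (auto intro!: cINF_lower cSUP_upper bdd_belowI2[where m = 0] bdd_aboveI2[where M = 1])

lemma credal_conglomerable:
  assumes "P \<in> credal_set lP" "countable \<B>" "measurable_partition \<B>"
    and "\<forall>B\<in>\<B>. lP B > 0" "A \<in> sets borel"
  shows "(INF B\<in>\<B>. measure P (A \<inter> B) / measure P B) \<le> measure P A"
    and "measure P A \<le> (SUP B\<in>\<B>. measure P (A \<inter> B) / measure P B)"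
proof -
  interpret prob_space P
    using credal_setD(1)[OF assms(1)] .
  have "\<B> \<subseteq> events" "\<Union>\<B> = space P" "disjoint \<B>"
    using assms(3) credal_setD(2,3)[OF assms(1)]
    unfolding measurable_partition_def disjoint_def by auto
  moreover have "prob B > 0" if "B \<in> \<B>" for B
    using assms(3,4) credal_setD(4)[OF assms(1)] that
    unfolding measurable_partition_def by force
  ultimately show "(INF B\<in>\<B>. prob (A \<inter> B) / prob B) \<le> prob A"
    and "prob A \<le> (SUP B\<in>\<B>. prob (A \<inter> B) / prob B)"
    using prob_conglomerable[of \<B> A] assms(2,5) credal_setD(2)[OF assms(1)] by auto
qed

lemma INF_gbayes_lower_le_lower_prob:
  assumes "coherent_lower_prob lP" "countable \<B>" "measurable_partition \<B>"
    and "\<forall>B\<in>\<B>. lP B > 0" "A \<in> sets borel"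
  shows "(INF B\<in>\<B>. gbayes_lower lP A B) \<le> lP A"
proof -
  have credal: "credal_set lP \<noteq> {}"
    and envelope: "lP A = (INF P\<in>credal_set lP. measure P A)"
    using assms(1,5) unfolding coherent_lower_prob_def by auto
  have part: "\<B> \<noteq> {}" "\<B> \<subseteq> sets borel"
    using assms(3) unfolding measurable_partition_def by auto
  have "(INF B\<in>\<B>. gbayes_lower lP A B) \<le> measure P A" if P: "P \<in> credal_set lP" for P
  proof -
    have "(INF B\<in>\<B>. gbayes_lower lP A B) \<le> (INF B\<in>\<B>. measure P (A \<inter> B) / measure P B)"
      using part gbayes_lower_nonneg[OF credal assms(5)] gbayes_lower_le[OF P assms(5)]
      by (intro cINF_mono bdd_belowI2[where m = 0]) auto
    also have "\<dots> \<le> measure P A"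
      using credal_conglomerable(1)[OF P assms(2-5)] .
    finally show ?thesis .
  qed
  then show ?thesis
    unfolding envelope using credal by (intro cINF_greatest)
qed

lemma upper_prob_le_SUP_gbayes_upper:
  assumes "coherent_lower_prob lP" "countable \<B>" "measurable_partition \<B>"
    and "\<forall>B\<in>\<B>. lP B > 0" "A \<in> sets borel"
  shows "upper_prob lP A \<le> (SUP B\<in>\<B>. gbayes_upper lP A B)"
proof -
  let ?U = "SUP B\<in>\<B>. gbayes_upper lP A B"
  have credal: "credal_set lP \<noteq> {}"
    and envelope: "lP (- A) = (INF P\<in>credal_set lP. measure P (- A))"
    using assms(1,5) unfolding coherent_lower_prob_def by auto
  have part: "\<B> \<noteq> {}" "\<B> \<subseteq> sets borel"
    using assms(3) unfolding measurable_partition_def by auto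
  have "1 - ?U \<le> measure P (- A)" if P: "P \<in> credal_set lP" for P
  proof -
    interpret prob_space P
      using credal_setD(1)[OF P] .
    have "prob A \<le> (SUP B\<in>\<B>. prob (A \<inter> B) / prob B)"
      using credal_conglomerable(2)[OF P assms(2-5)] .
    also have "\<dots> \<le> ?U"
      using part gbayes_upper_le_1[OF credal assms(5)] gbayes_upper_ge[OF P assms(5)]
      by (intro cSUP_mono bdd_aboveI2[where M = 1]) auto
    finally show ?thesis
      using prob_compl[of A] credal_setD(2,3)[OF P] assms(5) by (simp add: Compl_eq_Diff_UNIV)
  qed
  then have "1 - ?U \<le> lP (- A)"
    unfolding envelope using credal by (intro cINF_greatest)
  then show ?thesis
    unfolding upper_prob_def by linarith
qed

theorem theorem5p2:
  fixes lP :: "'a::polish_space set \<Rightarrow> real"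
    and \<B> :: "'a set set"
    and A :: "'a set"
  assumes "choquet_capacity_2 lP"
    and "countable \<B>"
    and "measurable_partition \<B>"
    and "\<forall>B\<in>\<B>. lP B > 0"
    and "A \<in> sets borel"
  shows "\<not> induces_sure_loss lP (gbayes_lower lP) (gbayes_upper lP) \<B> A
       \<and> \<not> strictly_contracts lP (gbayes_lower lP) (gbayes_upper lP) \<B> A
       \<and> \<not> contracts lP (gbayes_lower lP) (gbayes_upper lP) \<B> A"
proof -
  have coherent: "coherent_lower_prob lP"
    using choquet_capacity_2_imp_coherent[OF assms(1)] .
  have "(INF B\<in>\<B>. gbayes_lower lP A B) \<le> lP A"
    using INF_gbayes_lower_le_lower_prob[OF coherent assms(2-5)] .
  moreover have "lP A \<le> upper_prob lP A"
    using coherent assms(5) unfolding coherent_lower_prob_def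
    by (blast intro: lower_prob_le_upper_prob)
  moreover have "upper_prob lP A \<le> (SUP B\<in>\<B>. gbayes_upper lP A B)"
    using upper_prob_le_SUP_gbayes_upper[OF coherent assms(2-5)] .
  ultimately show ?thesis
    unfolding induces_sure_loss_def strictly_contracts_def contracts_def by linarith
qed

end
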